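(* Let $(\mu_z^\varepsilon)_{z\in V,\varepsilon\in[0,1]}$ be a time-affine random walk on $\mathcal G$. Then for every pair of distinct vertices $x,y$, the function $\varepsilon\mapsto {}^{\mathcal O}\mathrm{Ric}_\varepsilon(x,y)$ is concave on $[0,1]$.
   Context: $\mathcal G$ is a locally finite graph with vertex set $V$, and $\mathrm d$ is a distance on $V$ such that $(V,\mathrm d)$ is a complete metric space. A random walk is a family of probability measures $\mu_z^\varepsilon$ on $V$ ($z\in V$, $\varepsilon\in[0,1]$), each with finite first moment, continuous in $\varepsilon$, with $\mu_z^0=\delta_z$. It is time-affine if for all $x,y\in V$ the function $\varepsilon\mapsto\mu_x^\varepsilon(y)$ is affine. $\mathcal W_1$ denotes the $L^1$-Wasserstein distance with respect to $\mathrm d$: $\mathcal W_1(\mu,\nu)=\inf_q\sum_{u,v}\mathrm d(u,v)q(u,v)$ over couplings $q$ of $\mu,\nu$. The discrete-time Ollivier–Ricci curvature is ${}^{\mathcal O}\mathrm{Ric}_\varepsilon(x,y):=1-\mathcal W_1(\mu_x^\varepsilon,\mu_y^\varepsilon)/\mathrm d(x,y)$. *)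

theory Defs
  imports "HOL-Analysis.Analysis" "HOL-Probability.Probability"
begin

definition locally_finite_graph :: "('v \<Rightarrow> 'v \<Rightarrow> bool) \<Rightarrow> bool" where
  "locally_finite_graph E \<longleftrightarrow>
     (\<forall>x y. E x y \<longrightarrow> E y x) \<and> (\<forall>x. \<not> E x x) \<and> (\<forall>x. finite {y. E x y})"

definition couplings :: "'v pmf \<Rightarrow> 'v pmf \<Rightarrow> ('v \<times> 'v) pmf set" where
  "couplings \<mu> \<nu> = {q. map_pmf fst q = \<mu> \<and> map_pmf snd q = \<nu>}"

text \<open>L1-Wasserstein distance: infimum over couplings q of sum_{u,v} d(u,v) q(u,v)
  (computed in [0,\<infinity>] and converted to a real; finite under finite first moments).\<close>
definition W1 :: "('v \<Rightarrow> 'v \<Rightarrow> real) \<Rightarrow> 'v pmf \<Rightarrow> 'v pmf \<Rightarrow> real" where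
  "W1 d \<mu> \<nu> = enn2real (INF q\<in>couplings \<mu> \<nu>.
      \<integral>\<^sup>+ p. ennreal (d (fst p) (snd p)) \<partial>measure_pmf q)"

definition random_walk :: "('v \<Rightarrow> 'v \<Rightarrow> real) \<Rightarrow> ('v \<Rightarrow> real \<Rightarrow> 'v pmf) \<Rightarrow> bool" where
  "random_walk d \<mu> \<longleftrightarrow>
     (\<forall>z. \<forall>\<epsilon>\<in>{0..1}. (\<integral>\<^sup>+ v. ennreal (d z v) \<partial>measure_pmf (\<mu> z \<epsilon>)) < \<infinity>) \<and>
     (\<forall>z y. continuous_on {0..1} (\<lambda>\<epsilon>. pmf (\<mu> z \<epsilon>) y)) \<and>
     (\<forall>z. \<mu> z 0 = return_pmf z)"

definition time_affine :: "('v \<Rightarrow> real \<Rightarrow> 'v pmf) \<Rightarrow> bool" where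
  "time_affine \<mu> \<longleftrightarrow>
     (\<forall>x y. \<exists>a b. \<forall>\<epsilon>\<in>{0..1}. pmf (\<mu> x \<epsilon>) y = a + b * \<epsilon>)"

definition ORic :: "('v \<Rightarrow> 'v \<Rightarrow> real) \<Rightarrow> ('v \<Rightarrow> real \<Rightarrow> 'v pmf) \<Rightarrow> real \<Rightarrow> 'v \<Rightarrow> 'v \<Rightarrow> real" where
  "ORic d \<mu> \<epsilon> x y = 1 - W1 d (\<mu> x \<epsilon>) (\<mu> y \<epsilon>) / d x y"

end

theory Submission
  imports Defs
begin

text \<open>Time-affinity says that \<open>\<mu>\<^sub>z\<^sup>\<epsilon>\<close> at a convex combination of times is the same
  mixture of the measures at those times. Mixing couplings of the endpoint measures gives
  a coupling of the mixtures, and transport cost is linear in the coupling, so the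
  Wasserstein distance \<open>\<epsilon> \<mapsto> W\<^sub>1(\<mu>\<^sub>x\<^sup>\<epsilon>, \<mu>\<^sub>y\<^sup>\<epsilon>)\<close> is convex; the curvature
  \<open>1 - W\<^sub>1/d(x,y)\<close> is therefore concave.\<close>

definition mix_pmf :: "real \<Rightarrow> 'a pmf \<Rightarrow> 'a pmf \<Rightarrow> 'a pmf" where
  "mix_pmf t p q = bind_pmf (bernoulli_pmf t) (\<lambda>b. if b then q else p)"

lemma pmf_mix_pmf:
  assumes "0 \<le> t" "t \<le> 1"
  shows "pmf (mix_pmf t p q) i = (1 - t) * pmf p i + t * pmf q i"
  using assms by (simp add: mix_pmf_def pmf_bind)

lemma map_mix_pmf: "map_pmf f (mix_pmf t p q) = mix_pmf t (map_pmf f p) (map_pmf f q)"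
  unfolding mix_pmf_def map_bind_pmf by (intro bind_pmf_cong) auto

lemma nn_integral_mix_pmf:
  assumes "0 \<le> t" "t \<le> 1"
  shows "(\<integral>\<^sup>+x. f x \<partial>mix_pmf t p q) =
    ennreal (1 - t) * (\<integral>\<^sup>+x. f x \<partial>p) + ennreal t * (\<integral>\<^sup>+x. f x \<partial>q)"
  using assms by (simp add: mix_pmf_def mult.commute add.commute)

lemma mix_pmf_in_couplings:
  assumes "q1 \<in> couplings p1 r1" "q2 \<in> couplings p2 r2"
  shows "mix_pmf t q1 q2 \<in> couplings (mix_pmf t p1 p2) (mix_pmf t r1 r2)"
  using assms by (simp add: couplings_def map_mix_pmf)

lemma pair_pmf_in_couplings: "pair_pmf p r \<in> couplings p r"
  by (simp add: couplings_def map_fst_pair_pmf map_snd_pair_pmf)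

definition transport_cost :: "('v \<Rightarrow> 'v \<Rightarrow> real) \<Rightarrow> ('v \<times> 'v) pmf \<Rightarrow> ennreal" where
  "transport_cost d q = (\<integral>\<^sup>+ u. ennreal (d (fst u) (snd u)) \<partial>q)"

definition optimal_transport_cost :: "('v \<Rightarrow> 'v \<Rightarrow> real) \<Rightarrow> 'v pmf \<Rightarrow> 'v pmf \<Rightarrow> ennreal" where
  "optimal_transport_cost d p r = (INF q\<in>couplings p r. transport_cost d q)"

lemma W1_eq_optimal_transport_cost: "W1 d p r = enn2real (optimal_transport_cost d p r)"
  by (simp add: W1_def optimal_transport_cost_def transport_cost_def)

lemma transport_cost_mix_pmf:
  assumes "0 \<le> t" "t \<le> 1"
  shows "transport_cost d (mix_pmf t q1 q2) =
    ennreal (1 - t) * transport_cost d q1 + ennreal t * transport_cost d q2"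
  unfolding transport_cost_def by (rule nn_integral_mix_pmf[OF assms])

lemma transport_cost_le_first_moments:
  assumes M: "Metric_space UNIV d" and q: "q \<in> couplings p r"
  shows "transport_cost d q \<le>
    (\<integral>\<^sup>+ v. ennreal (d z v) \<partial>p) + ennreal (d z w) + (\<integral>\<^sup>+ v. ennreal (d w v) \<partial>r)"
proof -
  have nonneg: "0 \<le> d a b" for a b
    using Metric_space.nonneg[OF M] by blast
  have "d a b \<le> d z a + d z w + d w b" for a b
    using Metric_space.triangle[OF M, of a z b] Metric_space.triangle[OF M, of z w b]
      Metric_space.commute[OF M, of a z] by simp
  then have pointwise: "ennreal (d a b) \<le> ennreal (d z a) + ennreal (d z w) + ennreal (d w b)" for a b
    using nonneg by (simp flip: ennreal_plus add: ennreal_leI)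
  have "transport_cost d q \<le>
      (\<integral>\<^sup>+ u. ennreal (d z (fst u)) + ennreal (d z w) + ennreal (d w (snd u)) \<partial>q)"
    unfolding transport_cost_def by (intro nn_integral_mono pointwise)
  also have "\<dots> = (\<integral>\<^sup>+ u. ennreal (d z (fst u)) \<partial>q) + ennreal (d z w)
      + (\<integral>\<^sup>+ u. ennreal (d w (snd u)) \<partial>q)"
    by (simp add: nn_integral_add measure_pmf.emeasure_space_1)
  also have "\<dots> = (\<integral>\<^sup>+ v. ennreal (d z v) \<partial>map_pmf fst q) + ennreal (d z w)
      + (\<integral>\<^sup>+ v. ennreal (d w v) \<partial>map_pmf snd q)"
    by (simp only: nn_integral_map_pmf)
  also have "\<dots> = (\<integral>\<^sup>+ v. ennreal (d z v) \<partial>p) + ennreal (d z w) + (\<integral>\<^sup>+ v. ennreal (d w v) \<partial>r)"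
    using q by (simp add: couplings_def)
  finally show ?thesis .
qed

lemma optimal_transport_cost_less_top:
  fixes p r :: "'v pmf"
  assumes "Metric_space UNIV d"
    and "(\<integral>\<^sup>+ v. ennreal (d z v) \<partial>p) < \<infinity>" "(\<integral>\<^sup>+ v. ennreal (d w v) \<partial>r) < \<infinity>"
  shows "optimal_transport_cost d p r < \<infinity>"
proof -
  have "optimal_transport_cost d p r \<le> transport_cost d (pair_pmf p r)"
    unfolding optimal_transport_cost_def by (intro INF_lower pair_pmf_in_couplings)
  also have "\<dots> \<le> (\<integral>\<^sup>+ v. ennreal (d z v) \<partial>p) + ennreal (d z w) + (\<integral>\<^sup>+ v. ennreal (d w v) \<partial>r)"
    by (intro transport_cost_le_first_moments assms(1) pair_pmf_in_couplings)
  also have "\<dots> < \<infinity>"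
    using assms(2,3) by simp
  finally show ?thesis .
qed

lemma optimal_transport_cost_mix_pmf_le:
  assumes t: "0 \<le> t" "t \<le> 1"
    and fin1: "optimal_transport_cost d p1 r1 \<noteq> \<infinity>"
    and fin2: "optimal_transport_cost d p2 r2 \<noteq> \<infinity>"
  shows "optimal_transport_cost d (mix_pmf t p1 p2) (mix_pmf t r1 r2) \<le>
    ennreal (1 - t) * optimal_transport_cost d p1 r1 + ennreal t * optimal_transport_cost d p2 r2"
    (is "?I \<le> ennreal (1 - t) * ?I1 + ennreal t * ?I2")
proof (rule ennreal_le_epsilon)
  fix e :: real
  assume e: "0 < e"
  obtain q1 where q1: "q1 \<in> couplings p1 r1" "transport_cost d q1 < ?I1 + e"
    using INF_approx_ennreal[OF e _ fin1[unfolded optimal_transport_cost_def]]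
    unfolding optimal_transport_cost_def by blast
  obtain q2 where q2: "q2 \<in> couplings p2 r2" "transport_cost d q2 < ?I2 + e"
    using INF_approx_ennreal[OF e _ fin2[unfolded optimal_transport_cost_def]]
    unfolding optimal_transport_cost_def by blast
  have "?I \<le> transport_cost d (mix_pmf t q1 q2)"
    unfolding optimal_transport_cost_def by (intro INF_lower mix_pmf_in_couplings q1 q2)
  also have "\<dots> = ennreal (1 - t) * transport_cost d q1 + ennreal t * transport_cost d q2"
    by (rule transport_cost_mix_pmf[OF t])
  also have "\<dots> \<le> ennreal (1 - t) * (?I1 + e) + ennreal t * (?I2 + e)"
    using q1(2) q2(2) by (intro add_mono mult_left_mono) auto
  also have "\<dots> = ennreal (1 - t) * ?I1 + ennreal t * ?I2 + ennreal e"
    using t e by (simp add: distrib_left right_diff_distrib ac_simps flip: ennreal_mult ennreal_plus)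
  finally show "?I \<le> ennreal (1 - t) * ?I1 + ennreal t * ?I2 + ennreal e" .
qed

lemma W1_mix_pmf_le:
  assumes t: "0 \<le> t" "t \<le> 1"
    and fin1: "optimal_transport_cost d p1 r1 \<noteq> \<infinity>"
    and fin2: "optimal_transport_cost d p2 r2 \<noteq> \<infinity>"
  shows "W1 d (mix_pmf t p1 p2) (mix_pmf t r1 r2) \<le> (1 - t) * W1 d p1 r1 + t * W1 d p2 r2"
proof -
  obtain c1 where c1: "optimal_transport_cost d p1 r1 = ennreal c1" "0 \<le> c1"
    using fin1 by (cases "optimal_transport_cost d p1 r1") auto
  obtain c2 where c2: "optimal_transport_cost d p2 r2 = ennreal c2" "0 \<le> c2"
    using fin2 by (cases "optimal_transport_cost d p2 r2") auto
  have "optimal_transport_cost d (mix_pmf t p1 p2) (mix_pmf t r1 r2) \<le>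
      ennreal ((1 - t) * c1 + t * c2)"
    using optimal_transport_cost_mix_pmf_le[OF t fin1 fin2] t c1 c2
    by (simp flip: ennreal_mult ennreal_plus)
  then show ?thesis
    unfolding W1_eq_optimal_transport_cost using t c1 c2 by (simp add: enn2real_leI)
qed

lemma time_affine_eq_mix_pmf:
  assumes "time_affine \<mu>" and e: "e1 \<in> {0..1}" "e2 \<in> {0..1}" and t: "0 \<le> t" "t \<le> 1"
  shows "\<mu> z ((1 - t) * e1 + t * e2) = mix_pmf t (\<mu> z e1) (\<mu> z e2)"
proof (rule pmf_eqI)
  fix i
  obtain a b where affine: "\<And>\<epsilon>. \<epsilon> \<in> {0..1} \<Longrightarrow> pmf (\<mu> z \<epsilon>) i = a + b * \<epsilon>"
    using assms(1) unfolding time_affine_def by blast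
  have "(1 - t) * e1 + t * e2 \<in> {0..1}"
    using convexD_alt[OF convex_real_interval(5) e t] by (simp add: algebra_simps)
  then show "pmf (\<mu> z ((1 - t) * e1 + t * e2)) i = pmf (mix_pmf t (\<mu> z e1) (\<mu> z e2)) i"
    using e t by (simp add: affine pmf_mix_pmf algebra_simps)
qed

lemma convex_on_W1_time_affine:
  assumes M: "Metric_space UNIV d" and "random_walk d \<mu>" and "time_affine \<mu>"
  shows "convex_on {0..1} (\<lambda>\<epsilon>. W1 d (\<mu> x \<epsilon>) (\<mu> y \<epsilon>))"
proof (rule convex_onI)
  fix t e1 e2 :: real
  assume t: "0 < t" "t < 1" and e: "e1 \<in> {0..1}" "e2 \<in> {0..1}"
  have finite: "optimal_transport_cost d (\<mu> x \<epsilon>) (\<mu> y \<epsilon>) \<noteq> \<infinity>" if "\<epsilon> \<in> {0..1}" for \<epsilon>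
    using optimal_transport_cost_less_top[OF M, where z = x and w = y
        and p = "\<mu> x \<epsilon>" and r = "\<mu> y \<epsilon>"] \<open>random_walk d \<mu>\<close> that
    by (auto simp: random_walk_def)
  show "W1 d (\<mu> x ((1 - t) *\<^sub>R e1 + t *\<^sub>R e2)) (\<mu> y ((1 - t) *\<^sub>R e1 + t *\<^sub>R e2))
      \<le> (1 - t) * W1 d (\<mu> x e1) (\<mu> y e1) + t * W1 d (\<mu> x e2) (\<mu> y e2)"
    using t e finite
    by (simp add: time_affine_eq_mix_pmf[OF \<open>time_affine \<mu>\<close>] W1_mix_pmf_le)
qed simp

theorem mainTheorem4:
  fixes E :: "'v \<Rightarrow> 'v \<Rightarrow> bool"
    and d :: "'v \<Rightarrow> 'v \<Rightarrow> real"
    and \<mu> :: "'v \<Rightarrow> real \<Rightarrow> 'v pmf"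
  assumes "locally_finite_graph E"
    and "Metric_space UNIV d"
    and "Metric_space.mcomplete UNIV d"
    and "random_walk d \<mu>"
    and "time_affine \<mu>"
    and "x \<noteq> y"
  shows "concave_on {0..1} (\<lambda>\<epsilon>. ORic d \<mu> \<epsilon> x y)"
proof -
  have "convex_on {0..1} (\<lambda>\<epsilon>. W1 d (\<mu> x \<epsilon>) (\<mu> y \<epsilon>) / d x y)"
    using convex_on_W1_time_affine[OF assms(2,4,5)] Metric_space.nonneg[OF assms(2)]
    by (rule convex_on_cdiv[rotated])
  then show ?thesis
    unfolding ORic_def by (intro concave_on_diff) (simp_all add: concave_on_const)
qed

end
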